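(* Let $N\ge1$ and let $(A_N,H_N,D_N)$ be the fuzzy sphere spectral triple described in the context, with space of two-forms $\Omega^2(A_N)=\mathcal{S}/J^2$. Then $$\Omega^2(A_N)=\{X\otimes_{\mathbb{C}}\sigma_1\sigma_2+Y\otimes_{\mathbb{C}}\sigma_2\sigma_3+Z\otimes_{\mathbb{C}}\sigma_1\sigma_3:\ X,Y,Z\in A_N\},$$ in the sense that the quotient map $\mathcal{S}\to\Omega^2(A_N)$ restricts to a bijection from this subspace of $A_N\otimes_{\mathbb{C}}M_2(\mathbb{C})$ onto $\Omega^2(A_N)$.
   Context: Let $J_1,J_2,J_3$ be a basis of $su(2)$ with $[J_k,J_l]=\sum_m\epsilon_{klm}J_m$ ($\epsilon_{123}=1$). $\rho_{n/2}$ is the $(n+1)$-dimensional irreducible unitary representation of $su(2)$. $K_N=\oplus_{n=0}^N\mathbb{C}^{n+1}$, $X_k=\oplus_{n=0}^N\rho_{n/2}(J_k)$, $A_N=B(K_N)$, $H_N=K_N\otimes\mathbb{C}^2$ with $a\mapsto a\otimes1$; $\tau_k$ the Pauli matrices, $\sigma_k=\sqrt{-1}\tau_k$, $D_N=\sum_kX_k\otimes\sigma_k$; $B(H_N)=A_N\otimes M_2(\mathbb{C})$. The differential calculus of the spectral triple: $\Omega^1(A_N)=\{\sum_ja_j[D_N,b_j]\}$, $\mathcal{S}$ is the linear span of all products $a_0[D_N,a_1][D_N,a_2]$ ($a_i\in A_N$), $J^2=\{\sum_j[D_N,a_j][D_N,b_j]:\sum_ja_j[D_N,b_j]=0\}$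 (junk forms), and $\Omega^2(A_N)=\mathcal{S}/J^2$. *)

theory Defs
  imports Complex_Main "HOL-Library.Function_Algebras"
begin

text \<open>Linear operators on a finite-dimensional space with orthonormal basis indexed by a
finite set I are represented as matrices, i.e. functions  I => I => complex  (entries outside
I x I are zero).\<close>

type_synonym 'i mop = "'i \<Rightarrow> 'i \<Rightarrow> complex"

definition mmul :: "'i set \<Rightarrow> 'i mop \<Rightarrow> 'i mop \<Rightarrow> 'i mop" where
  "mmul I A B = (\<lambda>x y. \<Sum>z\<in>I. A x z * B z y)"

definition scal :: "complex \<Rightarrow> 'i mop \<Rightarrow> 'i mop" where
  "scal c A = (\<lambda>x y. c * A x y)"

text \<open>Basis of K_N = direct sum over n = 0..N of C^(n+1): pairs (n,i), 0 <= i <= n.\<close>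
definition KI :: "nat \<Rightarrow> (nat \<times> nat) set" where
  "KI N = {(n, i). n \<le> N \<and> i \<le> n}"

text \<open>Basis of H_N = K_N (x) C^2.\<close>
definition HI :: "nat \<Rightarrow> ((nat \<times> nat) \<times> nat) set" where
  "HI N = KI N \<times> {0, 1}"

text \<open>A_N = B(K_N).\<close>
definition AN :: "nat \<Rightarrow> (nat \<times> nat) mop set" where
  "AN N = {A. \<forall>x y. A x y \<noteq> 0 \<longrightarrow> x \<in> KI N \<and> y \<in> KI N}"

text \<open>Spin n/2 irreducible unitary representation of su(2) on C^(n+1), basis index
i = 0..n corresponding to magnetic number m = i - n/2.  With L_z = diag(m),
L_+ e_i = sqrt((i+1)(n-i)) e_(i+1), we put rho(J_k) = -i L_k; these are anti-Hermitian
and satisfy [J_k, J_l] = eps_klm J_m.\<close>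
definition cc :: "nat \<Rightarrow> nat \<Rightarrow> complex" where
  "cc n i = complex_of_real (sqrt (real ((i + 1) * (n - i))))"

definition rho :: "nat \<Rightarrow> nat \<Rightarrow> nat mop" where
  "rho n k = (\<lambda>a b.
     if a \<le> n \<and> b \<le> n then
       (if k = 1 then
          (if a = b + 1 then - \<i> * cc n b / 2 else if b = a + 1 then - \<i> * cc n a / 2 else 0)
        else if k = 2 then
          (if a = b + 1 then - cc n b / 2 else if b = a + 1 then cc n a / 2 else 0)
        else if k = 3 then
          (if a = b then - \<i> * complex_of_real (real a - real n / 2) else 0)
        else 0)
     else 0)"

text \<open>X_k = direct sum over n = 0..N of rho_(n/2)(J_k).\<close>
definition XN :: "nat \<Rightarrow> nat \<Rightarrow> (nat \<times> nat) mop" where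
  "XN N k = (\<lambda>(n, i) (m, j). if n = m \<and> n \<le> N then rho n k i j else 0)"

definition tau :: "nat \<Rightarrow> nat mop" where
  "tau k = (\<lambda>s t.
     if s \<le> 1 \<and> t \<le> 1 then
       (if k = 1 then (if s \<noteq> t then 1 else 0)
        else if k = 2 then (if s = 0 \<and> t = 1 then - \<i> else if s = 1 \<and> t = 0 then \<i> else 0)
        else if k = 3 then (if s = t then (if s = 0 then 1 else -1) else 0)
        else 0)
     else 0)"

definition sigma :: "nat \<Rightarrow> nat mop" where
  "sigma k = scal \<i> (tau k)"

definition one2 :: "nat mop" where
  "one2 = (\<lambda>s t. if s = t \<and> s \<le> 1 then 1 else 0)"

definition tensor :: "'i mop \<Rightarrow> nat mop \<Rightarrow> ('i \<times> nat) mop" where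
  "tensor A M = (\<lambda>(x, s) (y, t). A x y * M s t)"

definition emb :: "(nat \<times> nat) mop \<Rightarrow> ((nat \<times> nat) \<times> nat) mop" where
  "emb a = tensor a one2"

definition DN :: "nat \<Rightarrow> ((nat \<times> nat) \<times> nat) mop" where
  "DN N = (\<Sum>k\<in>{1, 2, 3}. tensor (XN N k) (sigma k))"

definition dD :: "nat \<Rightarrow> (nat \<times> nat) mop \<Rightarrow> ((nat \<times> nat) \<times> nat) mop" where
  "dD N a = mmul (HI N) (DN N) (emb a) - mmul (HI N) (emb a) (DN N)"

text \<open>S: linear span of all a0 [D,a1] [D,a2], written as finite linear combinations.\<close>
definition SN :: "nat \<Rightarrow> ((nat \<times> nat) \<times> nat) mop set" where
  "SN N = {\<omega>. \<exists>ts :: (complex \<times> (nat \<times> nat) mop \<times> (nat \<times> nat) mop \<times> (nat \<times> nat) mop) list.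
      (\<forall>(c, a0, a1, a2) \<in> set ts. a0 \<in> AN N \<and> a1 \<in> AN N \<and> a2 \<in> AN N) \<and>
      \<omega> = sum_list (map (\<lambda>(c, a0, a1, a2).
             scal c (mmul (HI N) (mmul (HI N) (emb a0) (dD N a1)) (dD N a2))) ts)}"

definition J2 :: "nat \<Rightarrow> ((nat \<times> nat) \<times> nat) mop set" where
  "J2 N = {\<omega>. \<exists>ps :: ((nat \<times> nat) mop \<times> (nat \<times> nat) mop) list.
      (\<forall>(a, b) \<in> set ps. a \<in> AN N \<and> b \<in> AN N) \<and>
      sum_list (map (\<lambda>(a, b). mmul (HI N) (emb a) (dD N b)) ps) = 0 \<and>
      \<omega> = sum_list (map (\<lambda>(a, b). mmul (HI N) (dD N a) (dD N b)) ps)}"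

text \<open>The quotient map S -> S/J^2, s |-> s + J^2, and Omega^2 = S/J^2 (set of cosets).\<close>
definition qmap :: "nat \<Rightarrow> ((nat \<times> nat) \<times> nat) mop \<Rightarrow> ((nat \<times> nat) \<times> nat) mop set" where
  "qmap N s = (\<lambda>j. s + j) ` J2 N"

definition Omega2 :: "nat \<Rightarrow> ((nat \<times> nat) \<times> nat) mop set set" where
  "Omega2 N = qmap N ` SN N"

definition WN :: "nat \<Rightarrow> ((nat \<times> nat) \<times> nat) mop set" where
  "WN N = {tensor X (mmul {0, 1} (sigma 1) (sigma 2))
           + tensor Y (mmul {0, 1} (sigma 2) (sigma 3))
           + tensor Z (mmul {0, 1} (sigma 1) (sigma 3)) | X Y Z.
           X \<in> AN N \<and> Y \<in> AN N \<and> Z \<in> AN N}"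

end

theory Submission
  imports Defs
begin

text \<open>Write operators on \<open>H\<^sub>N = K\<^sub>N \<otimes> \<complex>\<^sup>2\<close> in the basis \<open>1, \<sigma>\<^sub>1, \<sigma>\<^sub>2, \<sigma>\<^sub>3\<close>
  of \<open>M\<^sub>2(\<complex>)\<close> with coefficients in \<open>A\<^sub>N\<close>. The \<open>X\<^sub>k\<close> satisfy the \<open>su(2)\<close> relations and
  \<open>\<sigma>\<^sub>k \<sigma>\<^sub>l = - \<delta>\<^sub>k\<^sub>l - \<epsilon>\<^sub>k\<^sub>l\<^sub>m \<sigma>\<^sub>m\<close>, whence \<open>D\<^sup>2 = - D - C \<otimes> 1\<close> with the Casimir
  \<open>C = \<Sum> X\<^sub>k\<^sup>2\<close>. Therefore \<open>[D, a] [D, b] = D \<omega> + \<omega> D + \<omega> + a [C, b] \<otimes> 1\<close> for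
  \<open>\<omega> = a [D, b]\<close>, and every junk form lies in \<open>A\<^sub>N \<otimes> 1\<close>. Conversely every \<open>a \<otimes> 1\<close> is
  junk, because \<open>C\<close> distinguishes the spin-1/2 block from the spin-0 block (this is where
  \<open>N \<ge> 1\<close> enters), and every \<open>a \<otimes> \<sigma>\<^sub>k\<close> is a two-form built from matrix units through the
  spin-1/2 block. So \<open>\<Omega>\<^sup>2 = S / (A\<^sub>N \<otimes> 1)\<close> is represented by the span of the \<open>A\<^sub>N \<otimes> \<sigma>\<^sub>k\<close>,
  which is the span of the \<open>A\<^sub>N \<otimes> \<sigma>\<^sub>k \<sigma>\<^sub>l\<close>.\<close>

type_synonym k_op = "(nat \<times> nat) mop"
type_synonym h_op = "((nat \<times> nat) \<times> nat) mop"

lemma mmul_assoc: "mmul I (mmul I A B) C = mmul I A (mmul I B C)"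
proof (intro ext)
  fix x y
  have "mmul I (mmul I A B) C x y = (\<Sum>w\<in>I. \<Sum>z\<in>I. A x z * B z w * C w y)"
    by (simp add: mmul_def sum_distrib_right)
  also have "\<dots> = (\<Sum>z\<in>I. \<Sum>w\<in>I. A x z * B z w * C w y)"
    by (rule sum.swap)
  also have "\<dots> = mmul I A (mmul I B C) x y"
    by (simp add: mmul_def sum_distrib_left mult.assoc)
  finally show "mmul I (mmul I A B) C x y = mmul I A (mmul I B C) x y" .
qed

lemma mmul_add_left: "mmul I (A + B) C = mmul I A C + mmul I B C"
  by (simp add: mmul_def fun_eq_iff distrib_right sum.distrib)
lemma mmul_add_right: "mmul I A (B + C) = mmul I A B + mmul I A C"
  by (simp add: mmul_def fun_eq_iff distrib_left sum.distrib)
lemma mmul_diff_left: "mmul I (A - B) C = mmul I A C - mmul I B C"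
  by (simp add: mmul_def fun_eq_iff left_diff_distrib sum_subtractf)
lemma mmul_diff_right: "mmul I A (B - C) = mmul I A B - mmul I A C"
  by (simp add: mmul_def fun_eq_iff right_diff_distrib sum_subtractf)
lemma mmul_minus_left: "mmul I (- A) C = - mmul I A C"
  by (simp add: mmul_def fun_eq_iff sum_negf)
lemma mmul_minus_right: "mmul I A (- C) = - mmul I A C"
  by (simp add: mmul_def fun_eq_iff sum_negf)
lemma mmul_zero_left: "mmul I 0 C = 0"
  by (simp add: mmul_def fun_eq_iff)
lemma mmul_zero_right: "mmul I A 0 = 0"
  by (simp add: mmul_def fun_eq_iff)
lemma mmul_scal_left: "mmul I (scal c A) C = scal c (mmul I A C)"
  by (simp add: mmul_def scal_def fun_eq_iff sum_distrib_left mult.assoc)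
lemma mmul_scal_right: "mmul I A (scal c C) = scal c (mmul I A C)"
  by (simp add: mmul_def scal_def fun_eq_iff sum_distrib_left mult_ac)

lemmas mmul_linear = mmul_add_left mmul_add_right mmul_diff_left mmul_diff_right
  mmul_minus_left mmul_minus_right mmul_zero_left mmul_zero_right mmul_scal_left mmul_scal_right

lemma scal_apply: "scal c A x y = c * A x y"
  by (simp add: scal_def)
lemma scal_add: "scal c (A + B) = scal c A + scal c B"
  by (simp add: scal_def fun_eq_iff distrib_left)
lemma scal_diff: "scal c (A - B) = scal c A - scal c B"
  by (simp add: scal_def fun_eq_iff right_diff_distrib)
lemma scal_zero: "scal c 0 = 0"
  by (simp add: scal_def fun_eq_iff)
lemma scal_scal: "scal a (scal b A) = scal (a * b) A"
  by (simp add: scal_def fun_eq_iff)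
lemma scal_minus_one: "scal (- 1) A = - A"
  by (simp add: scal_def fun_eq_iff)

lemma scal_sum_list: "scal c (sum_list (map f xs)) = sum_list (map (\<lambda>x. scal c (f x)) xs)"
  by (induction xs) (simp_all only: list.map sum_list.Cons sum_list.Nil scal_zero scal_add)

lemma sum_eq_single:
  assumes "finite S" "c \<in> S" "\<And>z. z \<in> S \<Longrightarrow> z \<noteq> c \<Longrightarrow> f z = 0"
  shows "sum f S = f c"
  using sum.mono_neutral_left[of S "{c}" f] assms by simp

lemma sum_fun_apply: "sum f S x = (\<Sum>i\<in>S. f i x)"
  by (induction S rule: infinite_finite_induct) auto

definition matrix_unit :: "'i \<Rightarrow> 'i \<Rightarrow> 'i mop" where
  "matrix_unit x y = (\<lambda>u v. if u = x \<and> v = y then 1 else 0)"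

lemma mmul_matrix_unit_left:
  assumes "finite I" "p \<in> I"
  shows "mmul I (matrix_unit x p) B = (\<lambda>u v. if u = x then B p v else 0)"
  using assms by (auto simp: fun_eq_iff mmul_def matrix_unit_def if_distrib[of "\<lambda>t. t * _"]
      sum.delta' cong: if_cong)

lemma mmul_matrix_unit_right:
  assumes "finite I" "q \<in> I"
  shows "mmul I B (matrix_unit q r) = (\<lambda>u v. if v = r then B u q else 0)"
  using assms by (auto simp: fun_eq_iff mmul_def matrix_unit_def if_distrib[of "(*) _"]
      sum.delta cong: if_cong)

section \<open>Tensor products and the Pauli basis\<close>

lemma tensor_apply [simp]: "tensor A M (x, s) (y, t) = A x y * M s t"
  by (simp add: tensor_def)

lemma mop_pair_eqI:
  fixes F G :: "('a \<times> 'b) mop"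
  assumes "\<And>x s y t. F (x, s) (y, t) = G (x, s) (y, t)"
  shows "F = G"
proof (intro ext)
  fix u v
  show "F u v = G u v" by (cases u; cases v) (simp add: assms)
qed

lemma tensor_add_left: "tensor (A + B) M = tensor A M + tensor B M"
  by (rule mop_pair_eqI) (simp add: distrib_right)
lemma tensor_diff_left: "tensor (A - B) M = tensor A M - tensor B M"
  by (rule mop_pair_eqI) (simp add: left_diff_distrib)
lemma tensor_minus_left: "tensor (- A) M = - tensor A M"
  by (rule mop_pair_eqI) simp
lemma tensor_minus_right: "tensor A (- M) = - tensor A M"
  by (rule mop_pair_eqI) simp
lemma tensor_zero_left: "tensor 0 M = 0"
  by (rule mop_pair_eqI) simp
lemma tensor_scal_left: "tensor (scal c A) M = scal c (tensor A M)"
  by (rule mop_pair_eqI) (simp add: scal_def mult.assoc)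

lemma tensor_sum_left: "tensor (sum f S) M = (\<Sum>i\<in>S. tensor (f i) M)"
  by (rule mop_pair_eqI) (simp add: sum_fun_apply sum_distrib_right)

lemma tensor_mmul:
  assumes "finite I" "finite J"
  shows "mmul (I \<times> J) (tensor A M) (tensor B P) = tensor (mmul I A B) (mmul J M P)"
proof (rule mop_pair_eqI)
  fix x s y t
  have "mmul (I \<times> J) (tensor A M) (tensor B P) (x, s) (y, t)
      = (\<Sum>(z, u)\<in>I \<times> J. A x z * M s u * (B z y * P u t))"
    by (simp add: mmul_def case_prod_unfold tensor_def)
  also have "\<dots> = (\<Sum>z\<in>I. \<Sum>u\<in>J. A x z * B z y * (M s u * P u t))"
    by (simp add: sum.cartesian_product mult_ac)
  also have "\<dots> = tensor (mmul I A B) (mmul J M P) (x, s) (y, t)"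
    by (simp add: mmul_def sum_product)
  finally show "mmul (I \<times> J) (tensor A M) (tensor B P) (x, s) (y, t)
      = tensor (mmul I A B) (mmul J M P) (x, s) (y, t)" .
qed

lemma sigma_mult:
  "mmul {0,1} (sigma 1) (sigma 1) = - one2"
  "mmul {0,1} (sigma 2) (sigma 2) = - one2"
  "mmul {0,1} (sigma 3) (sigma 3) = - one2"
  "mmul {0,1} (sigma 1) (sigma 2) = - sigma 3"
  "mmul {0,1} (sigma 2) (sigma 1) = sigma 3"
  "mmul {0,1} (sigma 2) (sigma 3) = - sigma 1"
  "mmul {0,1} (sigma 3) (sigma 2) = sigma 1"
  "mmul {0,1} (sigma 3) (sigma 1) = - sigma 2"
  "mmul {0,1} (sigma 1) (sigma 3) = sigma 2"
  "mmul {0,1} one2 (sigma k) = sigma k"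
  "mmul {0,1} (sigma k) one2 = sigma k"
  "mmul {0,1} one2 one2 = one2"
  by (auto simp: fun_eq_iff mmul_def sigma_def tau_def scal_def one2_def)

definition pauli :: "'i mop \<Rightarrow> 'i mop \<Rightarrow> 'i mop \<Rightarrow> 'i mop \<Rightarrow> ('i \<times> nat) mop" where
  "pauli a b c d = tensor a (sigma 1) + tensor b (sigma 2) + tensor c (sigma 3) + tensor d one2"

lemma tensor_sigma_pauli:
  "tensor a (sigma 1) = pauli a 0 0 0" "tensor a (sigma 2) = pauli 0 a 0 0"
  "tensor a (sigma 3) = pauli 0 0 a 0"
  by (simp_all add: pauli_def tensor_zero_left)

lemma pauli_zero: "pauli 0 0 0 0 = 0"
  by (simp add: pauli_def tensor_zero_left)

lemma pauli_add: "pauli a b c d + pauli a' b' c' d' = pauli (a + a') (b + b') (c + c') (d + d')"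
  by (simp add: pauli_def tensor_add_left algebra_simps)

lemma pauli_diff: "pauli a b c d - pauli a' b' c' d' = pauli (a - a') (b - b') (c - c') (d - d')"
  by (simp add: pauli_def tensor_diff_left algebra_simps)

lemma pauli_minus: "- pauli a b c d = pauli (- a) (- b) (- c) (- d)"
  by (simp add: pauli_def tensor_minus_left algebra_simps)

lemma pauli_scal: "scal k (pauli a b c d) = pauli (scal k a) (scal k b) (scal k c) (scal k d)"
  by (simp add: pauli_def tensor_scal_left scal_add)

lemma pauli_eq_0_iff: "pauli a b c d = 0 \<longleftrightarrow> a = 0 \<and> b = 0 \<and> c = 0 \<and> d = 0"
proof
  assume eq: "pauli a b c d = 0"
  have entry: "pauli a b c d (x, s) (y, t) = 0" for x y s t
    using eq by simp
  have "a x y = 0 \<and> b x y = 0 \<and> c x y = 0 \<and> d x y = 0" for x y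
    using entry[of x 0 y 0] entry[of x 1 y 1] entry[of x 0 y 1] entry[of x 1 y 0]
    by (simp add: pauli_def sigma_def tau_def scal_def one2_def algebra_simps)
  then show "a = 0 \<and> b = 0 \<and> c = 0 \<and> d = 0"
    by (simp add: fun_eq_iff)
qed (simp add: pauli_zero)

lemma pauli_eq_iff: "pauli a b c d = pauli a' b' c' d' \<longleftrightarrow> a = a' \<and> b = b' \<and> c = c' \<and> d = d'"
  using pauli_eq_0_iff[of "a - a'" "b - b'" "c - c'" "d - d'"] by (simp add: pauli_diff[symmetric])

lemma pauli_mult:
  assumes "finite I"
  shows "mmul (I \<times> {0, 1}) (pauli a b c d) (pauli a' b' c' d') =
    pauli (mmul I a d' + mmul I d a' + mmul I c b' - mmul I b c')
          (mmul I b d' + mmul I d b' + mmul I a c' - mmul I c a')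
          (mmul I c d' + mmul I d c' + mmul I b a' - mmul I a b')
          (mmul I d d' - mmul I a a' - mmul I b b' - mmul I c c')"
  unfolding pauli_def
  apply (simp only: mmul_add_left mmul_add_right tensor_mmul[OF assms] finite.intros sigma_mult)
  by (simp add: tensor_minus_right tensor_add_left tensor_diff_left algebra_simps)

section \<open>The spin representations\<close>

definition weight :: "nat \<Rightarrow> nat \<Rightarrow> complex" where
  "weight n a = complex_of_real (real a - real n / 2)"

definition weight_op :: "nat \<Rightarrow> nat mop" where
  "weight_op n = (\<lambda>a b. if a = b \<and> a \<le> n then weight n a else 0)"

definition raise_op :: "nat \<Rightarrow> nat mop" where
  "raise_op n = (\<lambda>a b. if a = Suc b \<and> a \<le> n then cc n b else 0)"

definition lower_op :: "nat \<Rightarrow> nat mop" where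
  "lower_op n = (\<lambda>a b. if b = Suc a \<and> b \<le> n then cc n a else 0)"

lemma rho_1: "rho n 1 = scal (- \<i> / 2) (raise_op n + lower_op n)"
  by (auto simp: fun_eq_iff rho_def raise_op_def lower_op_def scal_def)
lemma rho_2: "rho n 2 = scal (1 / 2) (lower_op n - raise_op n)"
  by (auto simp: fun_eq_iff rho_def raise_op_def lower_op_def scal_def)
lemma rho_3: "rho n 3 = scal (- \<i>) (weight_op n)"
  by (auto simp: fun_eq_iff rho_def weight_op_def weight_def scal_def)

lemma cc_square:
  assumes "i \<le> n"
  shows "cc n i * cc n i = (of_nat i + 1) * (of_nat n - of_nat i)"
proof -
  define r where "r = real ((i + 1) * (n - i))"
  have "cc n i * cc n i = complex_of_real (sqrt r * sqrt r)"
    by (simp only: cc_def r_def of_real_mult)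
  also have "sqrt r * sqrt r = r"
    by (simp add: r_def)
  also have "complex_of_real r = (of_nat i + 1) * (of_nat n - of_nat i)"
    by (simp only: r_def of_nat_mult of_nat_add of_nat_1 of_nat_diff[OF assms] of_real_mult
        of_real_add of_real_diff of_real_1 of_real_of_nat_eq)
  finally show ?thesis .
qed

lemma mmul_weight_op_left:
  "mmul {..n} (weight_op n) B a b = (if a \<le> n then weight n a * B a b else 0)"
  unfolding mmul_def by (auto simp: weight_op_def sum_eq_single[where c = a])

lemma mmul_weight_op_right:
  "mmul {..n} B (weight_op n) a b = (if b \<le> n then B a b * weight n b else 0)"
  unfolding mmul_def by (auto simp: weight_op_def sum_eq_single[where c = b])

lemma mmul_raise_op_left:
  "mmul {..n} (raise_op n) B a b = (if 0 < a \<and> a \<le> n then cc n (a - 1) * B (a - 1) b else 0)"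
proof (cases "0 < a \<and> a \<le> n")
  case True
  then show ?thesis
    unfolding mmul_def by (subst sum_eq_single[where c = "a - 1"]) (auto simp: raise_op_def)
qed (auto simp: mmul_def raise_op_def)

lemma mmul_lower_op_left:
  "mmul {..n} (lower_op n) B a b = (if a + 1 \<le> n then cc n a * B (a + 1) b else 0)"
  unfolding mmul_def by (auto simp: lower_op_def sum_eq_single[where c = "a + 1"])

lemma weight_raise_comm:
  "mmul {..n} (weight_op n) (raise_op n) = mmul {..n} (raise_op n) (weight_op n) + raise_op n"
  by (auto simp: fun_eq_iff mmul_weight_op_left mmul_weight_op_right raise_op_def weight_def
      algebra_simps)

lemma weight_lower_comm:
  "mmul {..n} (weight_op n) (lower_op n) = mmul {..n} (lower_op n) (weight_op n) - lower_op n"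
  by (auto simp: fun_eq_iff mmul_weight_op_left mmul_weight_op_right lower_op_def weight_def
      algebra_simps)

lemma raise_lower_comm:
  "mmul {..n} (raise_op n) (lower_op n)
    = mmul {..n} (lower_op n) (raise_op n) + scal 2 (weight_op n)"
proof (intro ext)
  fix a b
  have raise_lower: "mmul {..n} (raise_op n) (lower_op n) a b
      = (if a = b \<and> a \<le> n then of_nat a * (of_nat n + 1 - of_nat a) else 0)"
    using cc_square[of "a - 1" n]
    by (cases a) (auto simp: mmul_raise_op_left lower_op_def algebra_simps)
  have lower_raise: "mmul {..n} (lower_op n) (raise_op n) a b
      = (if a = b \<and> a \<le> n then (of_nat a + 1) * (of_nat n - of_nat a) else 0)"
    using cc_square[of a n] by (auto simp: mmul_lower_op_left raise_op_def)
  show "mmul {..n} (raise_op n) (lower_op n) a b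
      = (mmul {..n} (lower_op n) (raise_op n) + scal 2 (weight_op n)) a b"
    by (simp add: raise_lower lower_raise scal_def weight_op_def weight_def algebra_simps)
qed

lemma rho_comm:
  "mmul {..n} (rho n 1) (rho n 2) - mmul {..n} (rho n 2) (rho n 1) = rho n 3"
  "mmul {..n} (rho n 2) (rho n 3) - mmul {..n} (rho n 3) (rho n 2) = rho n 1"
  "mmul {..n} (rho n 3) (rho n 1) - mmul {..n} (rho n 1) (rho n 3) = rho n 2"
  unfolding rho_1 rho_2 rho_3
  by (simp_all add: mmul_linear scal_scal fun_eq_iff scal_apply raise_lower_comm
      weight_raise_comm weight_lower_comm algebra_simps)

section \<open>The Dirac operator\<close>

definition blockdiag :: "nat \<Rightarrow> (nat \<Rightarrow> nat mop) \<Rightarrow> k_op" where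
  "blockdiag N F = (\<lambda>(n, i) (m, j). if n = m \<and> n \<le> N then F n i j else 0)"

lemma XN_blockdiag: "XN N k = blockdiag N (\<lambda>n. rho n k)"
  by (simp add: XN_def blockdiag_def)

lemma blockdiag_diff: "blockdiag N F - blockdiag N G = blockdiag N (\<lambda>n. F n - G n)"
  by (rule mop_pair_eqI) (simp add: blockdiag_def)

lemma KI_Sigma: "KI N = Sigma {..N} (\<lambda>n. {..n})"
  by (auto simp: KI_def)

lemma finite_KI: "finite (KI N)"
  by (simp add: KI_Sigma)

lemma mmul_blockdiag:
  "mmul (KI N) (blockdiag N F) (blockdiag N G) = blockdiag N (\<lambda>n. mmul {..n} (F n) (G n))"
proof (rule mop_pair_eqI)
  fix n i m j
  have "mmul (KI N) (blockdiag N F) (blockdiag N G) (n, i) (m, j)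
      = (\<Sum>p\<le>N. \<Sum>z\<le>p.
          (if n = p \<and> n \<le> N then F n i z else 0) * (if p = m \<and> p \<le> N then G p z j else 0))"
    unfolding mmul_def KI_Sigma blockdiag_def by (subst sum.Sigma) (auto intro!: sum.cong)
  also have "\<dots> = blockdiag N (\<lambda>n. mmul {..n} (F n) (G n)) (n, i) (m, j)"
  proof (cases "n = m \<and> n \<le> N")
    case True
    then show ?thesis
      by (subst sum_eq_single[where c = n]) (auto simp: mmul_def blockdiag_def)
  qed (auto simp: blockdiag_def intro!: sum.neutral)
  finally show "mmul (KI N) (blockdiag N F) (blockdiag N G) (n, i) (m, j)
      = blockdiag N (\<lambda>n. mmul {..n} (F n) (G n)) (n, i) (m, j)" .
qed

lemma XN_comm:
  "mmul (KI N) (XN N 1) (XN N 2) - mmul (KI N) (XN N 2) (XN N 1) = XN N 3"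
  "mmul (KI N) (XN N 2) (XN N 3) - mmul (KI N) (XN N 3) (XN N 2) = XN N 1"
  "mmul (KI N) (XN N 3) (XN N 1) - mmul (KI N) (XN N 1) (XN N 3) = XN N 2"
  unfolding XN_blockdiag mmul_blockdiag blockdiag_diff rho_comm by (rule refl)+

definition casimir :: "nat \<Rightarrow> k_op" where
  "casimir N = mmul (KI N) (XN N 1) (XN N 1) + mmul (KI N) (XN N 2) (XN N 2)
    + mmul (KI N) (XN N 3) (XN N 3)"

definition comm :: "nat \<Rightarrow> k_op \<Rightarrow> k_op \<Rightarrow> k_op" where
  "comm N T b = mmul (KI N) T b - mmul (KI N) b T"

lemmas mmul_HI_pauli = pauli_mult[OF finite_KI, folded HI_def]

lemma DN_pauli: "DN N = pauli (XN N 1) (XN N 2) (XN N 3) 0"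
  by (simp add: DN_def pauli_def tensor_zero_left add.assoc)

lemma emb_pauli: "emb a = pauli 0 0 0 a"
  by (simp add: emb_def pauli_def tensor_zero_left)

lemma DN_square: "mmul (HI N) (DN N) (DN N) = - DN N - emb (casimir N)"
proof -
  have "mmul (KI N) (XN N 3) (XN N 2) - mmul (KI N) (XN N 2) (XN N 3) = - XN N 1"
    "mmul (KI N) (XN N 1) (XN N 3) - mmul (KI N) (XN N 3) (XN N 1) = - XN N 2"
    "mmul (KI N) (XN N 2) (XN N 1) - mmul (KI N) (XN N 1) (XN N 2) = - XN N 3"
    using XN_comm by (metis minus_diff_eq)+
  then show ?thesis
    unfolding DN_pauli emb_pauli mmul_HI_pauli casimir_def pauli_minus pauli_diff
    by (simp add: mmul_zero_left mmul_zero_right)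
qed

lemma dD_pauli: "dD N b = pauli (comm N (XN N 1) b) (comm N (XN N 2) b) (comm N (XN N 3) b) 0"
  unfolding dD_def DN_pauli emb_pauli mmul_HI_pauli pauli_diff comm_def
  by (simp add: mmul_zero_left mmul_zero_right)

lemma emb_mult_pauli:
  "mmul (HI N) (emb a) (pauli p q r s)
    = pauli (mmul (KI N) a p) (mmul (KI N) a q) (mmul (KI N) a r) (mmul (KI N) a s)"
  unfolding emb_pauli mmul_HI_pauli by (simp add: mmul_zero_left mmul_zero_right)

lemma emb_mult: "mmul (HI N) (emb a) (emb b) = emb (mmul (KI N) a b)"
  unfolding emb_pauli[of b] emb_mult_pauli by (simp add: mmul_zero_right emb_pauli)

lemma two_form_pauli:
  fixes N :: nat and a b c :: k_op
  defines "T k l \<equiv> mmul (KI N) (mmul (KI N) a (comm N (XN N k) b)) (comm N (XN N l) c)"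
  shows "mmul (HI N) (mmul (HI N) (emb a) (dD N b)) (dD N c)
    = pauli (T 3 2 - T 2 3) (T 1 3 - T 3 1) (T 2 1 - T 1 2) (- T 1 1 - T 2 2 - T 3 3)"
  unfolding dD_pauli[of N c] dD_pauli[of N b] emb_mult_pauli mmul_HI_pauli T_def
  by (simp only: mmul_zero_left mmul_zero_right diff_zero add_0_right add_0_left diff_0)

lemma emb_add: "emb (a + b) = emb a + emb b"
  by (simp add: emb_def tensor_add_left)

lemma emb_diff: "emb (a - b) = emb a - emb b"
  by (simp add: emb_def tensor_diff_left)

lemma emb_scal: "emb (scal c a) = scal c (emb a)"
  by (simp add: emb_def tensor_scal_left)

lemma dD_scal: "dD N (scal c a) = scal c (dD N a)"
  by (simp add: dD_def emb_scal mmul_scal_left mmul_scal_right scal_diff)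

lemma emb_mult_assoc:
  "mmul (HI N) (emb a) (mmul (HI N) (emb b) X) = mmul (HI N) (emb (mmul (KI N) a b)) X"
  by (simp add: mmul_assoc[symmetric] emb_mult)

lemma DN_square_assoc:
  "mmul (HI N) (DN N) (mmul (HI N) (DN N) X)
    = - mmul (HI N) (DN N) X - mmul (HI N) (emb (casimir N)) X"
  by (simp add: mmul_assoc[symmetric] DN_square mmul_linear)

lemma KI_low_spin_indices:
  assumes "1 \<le> N"
  shows "(1, 0) \<in> KI N" "(1, 1) \<in> KI N" "(0, 0) \<in> KI N"
  using assms by (auto simp: KI_def)

lemma XN_spin_half_entries:
  assumes "1 \<le> N"
  shows
    "XN N 1 (1, 0) (1, 0) = 0" "XN N 2 (1, 0) (1, 0) = 0" "XN N 3 (1, 0) (1, 0) = \<i> / 2"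
    "XN N 1 (1, 1) (1, 1) = 0" "XN N 2 (1, 1) (1, 1) = 0" "XN N 3 (1, 1) (1, 1) = - \<i> / 2"
    "XN N 1 (1, 0) (1, 1) = - \<i> / 2" "XN N 2 (1, 0) (1, 1) = 1 / 2" "XN N 3 (1, 0) (1, 1) = 0"
    "XN N 1 (1, 1) (1, 0) = - \<i> / 2" "XN N 2 (1, 1) (1, 0) = - 1 / 2" "XN N 3 (1, 1) (1, 0) = 0"
    "XN N 1 (0, 0) (0, 0) = 0" "XN N 2 (0, 0) (0, 0) = 0" "XN N 3 (0, 0) (0, 0) = 0"
  using assms by (simp_all add: XN_def rho_def cc_def)

lemma casimir_spin_half_entries:
  assumes "1 \<le> N"
  shows "casimir N (1, 0) (1, 0) = - 3 / 4" "casimir N (1, 1) (1, 1) = - 3 / 4"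
    "casimir N (0, 0) (0, 0) = 0"
proof -
  have "{..1::nat} = {0, 1}" "{..0::nat} = {0}" by auto
  then show "casimir N (1, 0) (1, 0) = - 3 / 4" "casimir N (1, 1) (1, 1) = - 3 / 4"
    "casimir N (0, 0) (0, 0) = 0"
    using assms unfolding casimir_def XN_blockdiag mmul_blockdiag
    by (simp_all add: blockdiag_def mmul_def rho_def cc_def)
qed

lemma AN_zero: "0 \<in> AN N"
  by (simp add: AN_def)

lemma AN_add: "A \<in> AN N \<Longrightarrow> B \<in> AN N \<Longrightarrow> A + B \<in> AN N"
  by (auto simp: AN_def) (metis add.right_neutral)+

lemma AN_uminus: "A \<in> AN N \<Longrightarrow> - A \<in> AN N"
  by (auto simp: AN_def)

lemma AN_diff: "A \<in> AN N \<Longrightarrow> B \<in> AN N \<Longrightarrow> A - B \<in> AN N"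
  using AN_add[of A N "- B"] AN_uminus[of B N] by simp

lemma AN_scal: "A \<in> AN N \<Longrightarrow> scal c A \<in> AN N"
  by (auto simp: AN_def scal_def)

lemma AN_mmul:
  assumes "A \<in> AN N" "B \<in> AN N"
  shows "mmul (KI N) A B \<in> AN N"
  unfolding AN_def mem_Collect_eq
proof (intro allI impI)
  fix x y
  assume "mmul (KI N) A B x y \<noteq> 0"
  then obtain z where "A x z \<noteq> 0" "B z y \<noteq> 0"
    unfolding mmul_def by (metis (no_types, lifting) mult_not_zero sum.neutral)
  then show "x \<in> KI N \<and> y \<in> KI N"
    using assms unfolding AN_def by blast
qed

lemma XN_AN: "XN N k \<in> AN N"
  by (auto simp: AN_def XN_def KI_def rho_def split: if_splits)

lemma comm_AN: "T \<in> AN N \<Longrightarrow> b \<in> AN N \<Longrightarrow> comm N T b \<in> AN N"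
  by (simp add: comm_def AN_diff AN_mmul)

lemma matrix_unit_AN: "x \<in> KI N \<Longrightarrow> y \<in> KI N \<Longrightarrow> matrix_unit x y \<in> AN N"
  by (auto simp: AN_def matrix_unit_def)

lemma matrix_unit_mult_comm:
  assumes "p \<in> KI N" "q \<in> KI N" "r \<in> KI N"
  shows "mmul (KI N) (matrix_unit x p) (comm N T (matrix_unit q r))
    = scal (T p q) (matrix_unit x r) - (if p = q then mmul (KI N) (matrix_unit x r) T else 0)"
  unfolding comm_def mmul_diff_right
  apply (simp only: mmul_matrix_unit_left mmul_matrix_unit_right finite_KI assms)
  by (auto simp: fun_eq_iff scal_def matrix_unit_def)

lemma AN_matrix_unit_expansion:
  assumes "a \<in> AN N"
  shows "a = (\<Sum>(x, y)\<in>KI N \<times> KI N. scal (a x y) (matrix_unit x y))"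
proof (intro ext)
  fix u v
  show "a u v = (\<Sum>(x, y)\<in>KI N \<times> KI N. scal (a x y) (matrix_unit x y)) u v"
  proof (cases "(u, v) \<in> KI N \<times> KI N")
    case True
    then show ?thesis
      unfolding sum_fun_apply
      by (subst sum_eq_single[where c = "(u, v)"])
        (auto simp: finite_KI scal_def matrix_unit_def split: if_splits)
  next
    case False
    then have "a u v = 0"
      using assms unfolding AN_def by blast
    then show ?thesis
      using False unfolding sum_fun_apply
      by (auto simp: scal_def matrix_unit_def intro!: sum.neutral)
  qed
qed

lemma tensor_mem_if_matrix_units:
  assumes closed: "0 \<in> P" "\<And>u v. u \<in> P \<Longrightarrow> v \<in> P \<Longrightarrow> u + v \<in> P" "\<And>c u. u \<in> P \<Longrightarrow> scal c u \<in> P"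
    and units: "\<And>x y. x \<in> KI N \<Longrightarrow> y \<in> KI N \<Longrightarrow> tensor (matrix_unit x y) M \<in> P"
    and a: "a \<in> AN N"
  shows "tensor a M \<in> P"
proof -
  have sum_closed: "sum f S \<in> P" if "finite S" "\<And>i. i \<in> S \<Longrightarrow> f i \<in> P" for f and S :: "'a set"
    using that by (induction S rule: finite_induct) (auto intro: closed)
  have "tensor a M = (\<Sum>(x, y)\<in>KI N \<times> KI N. scal (a x y) (tensor (matrix_unit x y) M))"
    by (subst AN_matrix_unit_expansion[OF a])
      (simp add: tensor_sum_left case_prod_unfold tensor_scal_left)
  also have "\<dots> \<in> P"
    by (rule sum_closed) (auto simp: finite_KI intro: closed units)
  finally show ?thesis .
qed

section \<open>Junk forms\<close>

abbreviation one_form_sum :: "nat \<Rightarrow> (k_op \<times> k_op) list \<Rightarrow> h_op" where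
  "one_form_sum N ps \<equiv> (\<Sum>(a, b)\<leftarrow>ps. mmul (HI N) (emb a) (dD N b))"

abbreviation junk_sum :: "nat \<Rightarrow> (k_op \<times> k_op) list \<Rightarrow> h_op" where
  "junk_sum N ps \<equiv> (\<Sum>(a, b)\<leftarrow>ps. mmul (HI N) (dD N a) (dD N b))"

lemma dD_mult_dD:
  "mmul (HI N) (dD N a) (dD N b) =
     mmul (HI N) (DN N) (mmul (HI N) (emb a) (dD N b))
   + mmul (HI N) (mmul (HI N) (emb a) (dD N b)) (DN N)
   + mmul (HI N) (emb a) (dD N b)
   + emb (mmul (KI N) a (comm N (casimir N) b))"
  unfolding dD_def comm_def
  apply (simp only: mmul_linear mmul_assoc DN_square DN_square_assoc emb_mult emb_mult_assoc
      emb_diff)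
  by (simp add: algebra_simps)

lemma junk_sum_eq:
  "junk_sum N ps = mmul (HI N) (DN N) (one_form_sum N ps) + mmul (HI N) (one_form_sum N ps) (DN N)
     + one_form_sum N ps + emb (\<Sum>(a, b)\<leftarrow>ps. mmul (KI N) a (comm N (casimir N) b))"
proof (induction ps)
  case Nil
  show ?case
    by (simp only: list.map sum_list.Nil mmul_zero_left mmul_zero_right emb_def tensor_zero_left
        add_0_right)
next
  case (Cons p ps)
  obtain a b where p: "p = (a, b)" by (cases p)
  show ?case
    unfolding p list.map sum_list.Cons prod.case Cons.IH dD_mult_dD[of N a b]
    by (simp only: mmul_add_left mmul_add_right emb_add) (simp add: algebra_simps)
qed

lemma J2_emb: "\<omega> \<in> J2 N \<Longrightarrow> \<exists>M. \<omega> = emb M"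
  unfolding J2_def using junk_sum_eq by (auto simp: mmul_zero_left mmul_zero_right)

lemma J2_zero: "0 \<in> J2 N"
  unfolding J2_def by (auto intro!: exI[of _ "[]"])

lemma J2_add:
  assumes "u \<in> J2 N" "v \<in> J2 N"
  shows "u + v \<in> J2 N"
proof -
  obtain ps qs where
    "\<forall>(a, b)\<in>set ps. a \<in> AN N \<and> b \<in> AN N" "one_form_sum N ps = 0" "u = junk_sum N ps"
    "\<forall>(a, b)\<in>set qs. a \<in> AN N \<and> b \<in> AN N" "one_form_sum N qs = 0" "v = junk_sum N qs"
    using assms unfolding J2_def by blast
  then show ?thesis
    unfolding J2_def by (intro CollectI exI[of _ "ps @ qs"]) auto
qed

lemma J2_scal:
  assumes "u \<in> J2 N"
  shows "scal c u \<in> J2 N"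
proof -
  obtain ps where ps:
    "\<forall>(a, b)\<in>set ps. a \<in> AN N \<and> b \<in> AN N" "one_form_sum N ps = 0" "u = junk_sum N ps"
    using assms unfolding J2_def by blast
  define qs where "qs = map (\<lambda>(a, b). (scal c a, b)) ps"
  have "one_form_sum N qs = scal c (one_form_sum N ps)" "junk_sum N qs = scal c (junk_sum N ps)"
    by (simp_all add: qs_def scal_sum_list comp_def case_prod_unfold emb_scal dD_scal
        mmul_scal_left)
  then show ?thesis
    unfolding J2_def using ps by (intro CollectI exI[of _ qs]) (auto simp: qs_def AN_scal scal_zero)
qed

lemma J2_diff: "u \<in> J2 N \<Longrightarrow> v \<in> J2 N \<Longrightarrow> u - v \<in> J2 N"
  using J2_add[of u N "scal (- 1) v"] J2_scal[of v N "- 1"] by (simp add: scal_minus_one)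

text \<open>The weights \<open>c, c, -2c\<close> of the routes through the spin-1/2 and spin-0 blocks sum
  to zero and cancel the diagonal entries of every \<open>X\<^sub>k\<close>, so that \<open>\<Sum> a [D, b] = 0\<close>;
  they do not cancel those of the Casimir (\<open>-3/4\<close> on spin 1/2, \<open>0\<close> on spin 0).\<close>

lemma emb_matrix_unit_J2:
  assumes N: "1 \<le> N" and x: "x \<in> KI N" and y: "y \<in> KI N"
  shows "emb (matrix_unit x y) \<in> J2 N"
proof -
  note block = KI_low_spin_indices[OF N]
  define c :: complex where "c = - 2 / 3"
  define ps where "ps =
    [(scal c (matrix_unit x (1, 0)), matrix_unit (1, 0) y),
     (scal c (matrix_unit x (1, 1)), matrix_unit (1, 1) y),
     (scal (- 2 * c) (matrix_unit x (0, 0)), matrix_unit (0, 0) y)]"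
  have AN: "\<forall>(a, b)\<in>set ps. a \<in> AN N \<and> b \<in> AN N"
    using block x y by (auto simp: ps_def matrix_unit_AN AN_scal)
  have one_form: "one_form_sum N ps = 0"
    unfolding ps_def
    apply (simp only: list.map prod.case sum_list.Cons sum_list.Nil emb_scal mmul_scal_left
        dD_pauli emb_mult_pauli matrix_unit_mult_comm block x y if_True mmul_zero_right
        pauli_scal pauli_add add_0_right pauli_eq_0_iff)
    by (simp add: fun_eq_iff scal_apply XN_spin_half_entries[OF N, unfolded One_nat_def] c_def
        algebra_simps)
  have casimir: "(\<Sum>(a, b)\<leftarrow>ps. mmul (KI N) a (comm N (casimir N) b)) = matrix_unit x y"
    unfolding ps_def
    apply (simp only: list.map prod.case sum_list.Cons sum_list.Nil mmul_scal_left
        matrix_unit_mult_comm block x y if_True)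
    by (simp add: fun_eq_iff scal_apply casimir_spin_half_entries[OF N, unfolded One_nat_def]
        c_def algebra_simps matrix_unit_def)
  have "junk_sum N ps = emb (matrix_unit x y)"
    using junk_sum_eq[of N ps] by (simp add: one_form casimir mmul_zero_left mmul_zero_right)
  then show ?thesis
    unfolding J2_def using AN one_form by (intro CollectI exI[of _ ps]) simp
qed

lemma emb_J2: "1 \<le> N \<Longrightarrow> a \<in> AN N \<Longrightarrow> emb a \<in> J2 N"
  unfolding emb_def
  by (rule tensor_mem_if_matrix_units[where P = "J2 N"])
    (auto intro: J2_zero J2_add J2_scal emb_matrix_unit_J2[unfolded emb_def])

section \<open>Two-forms\<close>

abbreviation two_form_sum :: "nat \<Rightarrow> (complex \<times> k_op \<times> k_op \<times> k_op) list \<Rightarrow> h_op" where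
  "two_form_sum N ts \<equiv>
     (\<Sum>(c, a0, a1, a2)\<leftarrow>ts. scal c (mmul (HI N) (mmul (HI N) (emb a0) (dD N a1)) (dD N a2)))"

lemma SN_intro:
  "\<forall>(c, a0, a1, a2)\<in>set ts. a0 \<in> AN N \<and> a1 \<in> AN N \<and> a2 \<in> AN N \<Longrightarrow> two_form_sum N ts \<in> SN N"
  unfolding SN_def by blast

lemma SN_zero: "0 \<in> SN N"
  using SN_intro[of "[]"] by simp

lemma SN_add:
  assumes "u \<in> SN N" "v \<in> SN N"
  shows "u + v \<in> SN N"
proof -
  obtain ts us where
    "\<forall>(c, a0, a1, a2)\<in>set ts. a0 \<in> AN N \<and> a1 \<in> AN N \<and> a2 \<in> AN N" "u = two_form_sum N ts"
    "\<forall>(c, a0, a1, a2)\<in>set us. a0 \<in> AN N \<and> a1 \<in> AN N \<and> a2 \<in> AN N" "v = two_form_sum N us"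
    using assms unfolding SN_def by blast
  then show ?thesis
    unfolding SN_def by (intro CollectI exI[of _ "ts @ us"]) auto
qed

lemma SN_scal:
  assumes "u \<in> SN N"
  shows "scal c u \<in> SN N"
proof -
  obtain ts where ts:
    "\<forall>(c, a0, a1, a2)\<in>set ts. a0 \<in> AN N \<and> a1 \<in> AN N \<and> a2 \<in> AN N" "u = two_form_sum N ts"
    using assms unfolding SN_def by blast
  define us where "us = map (\<lambda>(d, a0, a1, a2). (c * d, a0, a1, a2)) ts"
  have "two_form_sum N us = scal c (two_form_sum N ts)"
    by (simp add: us_def scal_sum_list comp_def case_prod_unfold scal_scal)
  then show ?thesis
    unfolding SN_def using ts by (intro CollectI exI[of _ us] conjI) (auto simp: us_def)
qed

lemma SN_pauli:
  assumes "s \<in> SN N"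
  obtains a b c d where "a \<in> AN N" "b \<in> AN N" "c \<in> AN N" "d \<in> AN N" "s = pauli a b c d"
proof -
  obtain ts where ts: "\<forall>(c, a0, a1, a2)\<in>set ts. a0 \<in> AN N \<and> a1 \<in> AN N \<and> a2 \<in> AN N"
    and s: "s = two_form_sum N ts"
    using assms unfolding SN_def by blast
  have "\<exists>a b c d. two_form_sum N ts = pauli a b c d \<and> a \<in> AN N \<and> b \<in> AN N \<and> c \<in> AN N \<and> d \<in> AN N"
    using ts
  proof (induction ts)
    case Nil
    have "two_form_sum N [] = pauli 0 0 0 0"
      by (simp only: list.map sum_list.Nil pauli_zero)
    then show ?case
      using AN_zero by blast
  next
    case (Cons t ts)
    obtain k a0 a1 a2 where t: "t = (k, a0, a1, a2)"
      by (cases t)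
    obtain a b c d where abcd: "two_form_sum N ts = pauli a b c d"
      "a \<in> AN N" "b \<in> AN N" "c \<in> AN N" "d \<in> AN N"
      using Cons by auto
    have T: "mmul (KI N) (mmul (KI N) a0 (comm N (XN N i) a1)) (comm N (XN N j) a2) \<in> AN N" for i j
      using Cons.prems by (simp add: t AN_mmul comm_AN XN_AN)
    show ?case
      unfolding t list.map prod.case sum_list.Cons two_form_pauli[of N a0 a1 a2] abcd(1)
        pauli_scal pauli_add
      by ((rule exI)+, rule conjI[OF refl]) (intro conjI AN_add AN_diff AN_uminus AN_scal T abcd)
  qed
  then show ?thesis
    using s that by blast
qed

text \<open>The witnesses run through the spin-1/2 block, the smallest one on which the \<open>X\<^sub>k\<close>
  act nontrivially.\<close>

lemma matrix_unit_sigma_SN: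
  assumes N: "1 \<le> N" and x: "x \<in> KI N" and y: "y \<in> KI N"
  shows "tensor (matrix_unit x y) (sigma 1) \<in> SN N" "tensor (matrix_unit x y) (sigma 2) \<in> SN N"
    "tensor (matrix_unit x y) (sigma 3) \<in> SN N"
proof -
  note block = KI_low_spin_indices[OF N]
  have neq: "(1::nat, 0::nat) \<noteq> (1, 1)" "(1::nat, 1::nat) \<noteq> (1, 0)"
    by auto
  let ?E = "matrix_unit :: nat \<times> nat \<Rightarrow> nat \<times> nat \<Rightarrow> k_op"
  define ts1 where "ts1 =
    [(- \<i>, ?E x (1, 0), ?E (1, 0) (1, 0), ?E (1, 1) y),
     (\<i>, ?E x (1, 1), ?E (1, 1) (1, 0), ?E (1, 1) y),
     (\<i>, ?E x (1, 0), ?E (1, 0) (1, 1), ?E (1, 0) y),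
     (- \<i>, ?E x (1, 1), ?E (1, 1) (1, 1), ?E (1, 0) y)]"
  define ts2 where "ts2 =
    [(- 1 :: complex, ?E x (1, 0), ?E (1, 0) (1, 0), ?E (1, 1) y),
     (1, ?E x (1, 1), ?E (1, 1) (1, 0), ?E (1, 1) y),
     (- 1, ?E x (1, 0), ?E (1, 0) (1, 1), ?E (1, 0) y),
     (1, ?E x (1, 1), ?E (1, 1) (1, 1), ?E (1, 0) y)]"
  define ts3 where "ts3 =
    [(- \<i>, ?E x (1, 1), ?E (1, 0) (1, 0), ?E (1, 1) y),
     (\<i>, ?E x (1, 0), ?E (1, 1) (1, 1), ?E (1, 0) y)]"
  have sums: "two_form_sum N ts1 = tensor (?E x y) (sigma 1)"
    "two_form_sum N ts2 = tensor (?E x y) (sigma 2)"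
    "two_form_sum N ts3 = tensor (?E x y) (sigma 3)"
    unfolding ts1_def ts2_def ts3_def tensor_sigma_pauli
    by (simp only: list.map prod.case sum_list.Cons sum_list.Nil two_form_pauli mmul_scal_left
        mmul_diff_left mmul_zero_left matrix_unit_mult_comm block x y neq if_True if_False simp_thms
        pauli_scal pauli_add add_0_right pauli_eq_iff,
        simp add: fun_eq_iff scal_apply XN_spin_half_entries[OF N, unfolded One_nat_def]
          algebra_simps)+
  have AN: "\<forall>(c, a0, a1, a2)\<in>set ts. a0 \<in> AN N \<and> a1 \<in> AN N \<and> a2 \<in> AN N"
    if "ts \<in> {ts1, ts2, ts3}" for ts
    using that block x y by (auto simp: ts1_def ts2_def ts3_def matrix_unit_AN)
  show "tensor (?E x y) (sigma 1) \<in> SN N" "tensor (?E x y) (sigma 2) \<in> SN N"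
    "tensor (?E x y) (sigma 3) \<in> SN N"
    using SN_intro[OF AN[of ts1]] SN_intro[OF AN[of ts2]] SN_intro[OF AN[of ts3]]
    by (simp_all add: sums)
qed

lemma WN_eq_pauli: "WN N = {pauli a b c 0 | a b c. a \<in> AN N \<and> b \<in> AN N \<and> c \<in> AN N}"
proof -
  have form: "tensor X (mmul {0, 1} (sigma 1) (sigma 2))
      + tensor Y (mmul {0, 1} (sigma 2) (sigma 3))
      + tensor Z (mmul {0, 1} (sigma 1) (sigma 3)) = pauli (- Y) Z (- X) 0" for X Y Z
    unfolding sigma_mult pauli_def
    by (simp add: tensor_minus_left tensor_minus_right tensor_zero_left)
  have "WN N = {pauli (- Y) Z (- X) 0 | X Y Z. X \<in> AN N \<and> Y \<in> AN N \<and> Z \<in> AN N}"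
    unfolding WN_def form ..
  also have "\<dots> = {pauli a b c 0 | a b c. a \<in> AN N \<and> b \<in> AN N \<and> c \<in> AN N}"
  proof (intro equalityI subsetI)
    fix w
    assume "w \<in> {pauli (- Y) Z (- X) 0 | X Y Z. X \<in> AN N \<and> Y \<in> AN N \<and> Z \<in> AN N}"
    then show "w \<in> {pauli a b c 0 | a b c. a \<in> AN N \<and> b \<in> AN N \<and> c \<in> AN N}"
      using AN_uminus by blast
  next
    fix w
    assume "w \<in> {pauli a b c 0 | a b c. a \<in> AN N \<and> b \<in> AN N \<and> c \<in> AN N}"
    then obtain a b c where "w = pauli a b c 0" "a \<in> AN N" "b \<in> AN N" "c \<in> AN N"
      by blast
    then show "w \<in> {pauli (- Y) Z (- X) 0 | X Y Z. X \<in> AN N \<and> Y \<in> AN N \<and> Z \<in> AN N}"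
      by (intro CollectI exI[of _ "- c"] exI[of _ "- a"] exI[of _ b]) (simp add: AN_uminus)
  qed
  finally show ?thesis .
qed

lemma WN_subset_SN:
  assumes N: "1 \<le> N"
  shows "WN N \<subseteq> SN N"
proof
  fix w
  assume "w \<in> WN N"
  then obtain a b c where w: "w = pauli a b c 0" and abc: "a \<in> AN N" "b \<in> AN N" "c \<in> AN N"
    unfolding WN_eq_pauli by blast
  have "tensor e (sigma k) \<in> SN N" if e: "e \<in> AN N" and k: "k \<in> {1, 2, 3}" for e k
    by (rule tensor_mem_if_matrix_units[OF SN_zero SN_add SN_scal _ e])
      (use matrix_unit_sigma_SN[OF N] k in auto)
  then show "w \<in> SN N"
    unfolding w pauli_def tensor_zero_left add_0_right using abc by (simp add: SN_add)
qed

lemma qmap_eq_iff: "qmap N u = qmap N v \<longleftrightarrow> u - v \<in> J2 N"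
proof
  assume "qmap N u = qmap N v"
  moreover have "u \<in> qmap N u"
    unfolding qmap_def using J2_zero by (metis add.right_neutral image_eqI)
  ultimately show "u - v \<in> J2 N"
    unfolding qmap_def by auto
next
  assume uv: "u - v \<in> J2 N"
  show "qmap N u = qmap N v"
    unfolding qmap_def
  proof (intro equalityI image_subsetI)
    fix j
    assume "j \<in> J2 N"
    then show "u + j \<in> (\<lambda>j. v + j) ` J2 N"
      using J2_add[OF uv] by (intro rev_image_eqI[of "u - v + j"]) auto
    show "v + j \<in> (\<lambda>j. u + j) ` J2 N"
      using J2_diff[OF \<open>j \<in> J2 N\<close> uv] by (intro rev_image_eqI[of "j - (u - v)"]) auto
  qed
qed

lemma inj_on_qmap_WN: "inj_on (qmap N) (WN N)"
proof (rule inj_onI)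
  fix w w'
  assume "w \<in> WN N" "w' \<in> WN N" "qmap N w = qmap N w'"
  then obtain a b c a' b' c' where w: "w = pauli a b c 0" "w' = pauli a' b' c' 0"
    and "w - w' \<in> J2 N"
    unfolding WN_eq_pauli qmap_eq_iff by blast
  then obtain M where "pauli (a - a') (b - b') (c - c') 0 = pauli 0 0 0 M"
    using J2_emb by (metis pauli_diff emb_pauli diff_zero)
  then show "w = w'"
    unfolding w by (simp add: pauli_eq_iff)
qed

lemma qmap_WN_eq_Omega2:
  assumes N: "1 \<le> N"
  shows "qmap N ` WN N = Omega2 N"
proof
  show "qmap N ` WN N \<subseteq> Omega2 N"
    unfolding Omega2_def using WN_subset_SN[OF N] by blast
  show "Omega2 N \<subseteq> qmap N ` WN N"
  proof
    fix q
    assume "q \<in> Omega2 N"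
    then obtain s where s_SN: "s \<in> SN N" and q: "q = qmap N s"
      unfolding Omega2_def by blast
    obtain a b c d where abcd: "a \<in> AN N" "b \<in> AN N" "c \<in> AN N" "d \<in> AN N"
      and s: "s = pauli a b c d"
      using s_SN by (rule SN_pauli)
    have "s - pauli a b c 0 \<in> J2 N"
      using emb_J2[OF N abcd(4)] by (simp add: s pauli_diff emb_pauli)
    then have "q = qmap N (pauli a b c 0)"
      unfolding q qmap_eq_iff .
    moreover have "pauli a b c 0 \<in> WN N"
      using abcd unfolding WN_eq_pauli by blast
    ultimately show "q \<in> qmap N ` WN N"
      by blast
  qed
qed

theorem corollary8p4:
  fixes N :: nat
  assumes "N \<ge> 1"
  shows "WN N \<subseteq> SN N \<and> bij_betw (qmap N) (WN N) (Omega2 N)"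
  using WN_subset_SN[OF assms] inj_on_qmap_WN qmap_WN_eq_Omega2[OF assms]
  by (simp add: bij_betw_def)

end
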